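(* Fix a $\mathbb{Z}$-basis $u_1,\dots,u_d$ of $\mathcal{O}_K$. Let $\Lambda=\mathcal{O}_Kv_1\oplus\cdots\oplus\mathcal{O}_Kv_k\subseteq K_{\mathbb{R}}^m$ be a free $\mathcal{O}_K$-module of rank $k\leq m$. Then there exists a $\mathbb{Z}$-basis $\{w_{ij}\}_{1\leq i\leq k,\,1\leq j\leq d}$ of $\Lambda$ such that for all $i,j$ \[ c\,\|v_i\|\leq\|w_{ij}\|\leq c'\,\|v_i\|, \] where $c,c'>0$ depend only on the fixed $\mathbb{Z}$-basis of $\mathcal{O}_K$, and not on $v_1,\dots,v_k$, $\Lambda$, $k$ or $m$.
   Context: $K$ is a number field of degree $d$, $K_{\mathbb{R}}=K\otimes\mathbb{R}$ with norm $\|x\|^2=|\Delta_K|^{-2/d}\operatorname{Tr}(x\bar{x})$ ($\Delta_K$ the discriminant, $\bar{\ }$ complex conjugation at complex places), and $K_{\mathbb{R}}^m$ carries the orthogonal sum of $m$ copies of this norm. *)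

theory Defs
  imports "HOL-Analysis.Analysis" "HOL-Computational_Algebra.Polynomial"
begin

text \<open>A number field is modelled as a subfield K of the complex numbers that is
finite-dimensional over the rationals (every number field is isomorphic to one).\<close>

definition subfield_C :: "complex set \<Rightarrow> bool" where
  "subfield_C K \<longleftrightarrow> 0 \<in> K \<and> 1 \<in> K \<and>
     (\<forall>x\<in>K. \<forall>y\<in>K. x + y \<in> K \<and> x * y \<in> K) \<and>
     (\<forall>x\<in>K. - x \<in> K \<and> inverse x \<in> K)"

definition Q_basis :: "complex set \<Rightarrow> nat \<Rightarrow> (nat \<Rightarrow> complex) \<Rightarrow> bool" where
  "Q_basis K n b \<longleftrightarrow> (\<forall>j<n. b j \<in> K) \<and>
     (\<forall>x\<in>K. \<exists>q::nat \<Rightarrow> rat. x = (\<Sum>j<n. of_rat (q j) * b j)) \<and>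
     (\<forall>q::nat \<Rightarrow> rat. (\<Sum>j<n. of_rat (q j) * b j) = 0 \<longrightarrow> (\<forall>j<n. q j = 0))"

definition number_field :: "complex set \<Rightarrow> bool" where
  "number_field K \<longleftrightarrow> subfield_C K \<and> (\<exists>n b. Q_basis K n b)"

definition nf_degree :: "complex set \<Rightarrow> nat" where
  "nf_degree K = (THE n. \<exists>b. Q_basis K n b)"

definition algebraic_integer :: "complex \<Rightarrow> bool" where
  "algebraic_integer x \<longleftrightarrow> (\<exists>p :: int poly. lead_coeff p = 1 \<and> poly (map_poly of_int p) x = 0)"

definition ring_of_integers :: "complex set \<Rightarrow> complex set" where
  "ring_of_integers K = {x \<in> K. algebraic_integer x}"

definition Z_basis_OK :: "complex set \<Rightarrow> nat \<Rightarrow> (nat \<Rightarrow> complex) \<Rightarrow> bool" where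
  "Z_basis_OK K n u \<longleftrightarrow> (\<forall>j<n. u j \<in> ring_of_integers K) \<and>
     (\<forall>x\<in>ring_of_integers K. \<exists>a::nat \<Rightarrow> int. x = (\<Sum>j<n. of_int (a j) * u j)) \<and>
     (\<forall>a::nat \<Rightarrow> int. (\<Sum>j<n. of_int (a j) * u j) = 0 \<longrightarrow> (\<forall>j<n. a j = 0))"

definition embeddings :: "complex set \<Rightarrow> (complex \<Rightarrow> complex) set" where
  "embeddings K = {\<sigma>. (\<forall>x\<in>K. \<forall>y\<in>K. \<sigma> (x + y) = \<sigma> x + \<sigma> y \<and> \<sigma> (x * y) = \<sigma> x * \<sigma> y)
      \<and> \<sigma> 1 = 1 \<and> (\<forall>x. x \<notin> K \<longrightarrow> \<sigma> x = 0)}"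

definition nf_trace :: "complex set \<Rightarrow> complex \<Rightarrow> complex" where
  "nf_trace K x = (\<Sum>\<sigma>\<in>embeddings K. \<sigma> x)"

text \<open>Discriminant: det (Tr(b_i b_j)) for a Z-basis b of O_K (independent of the choice).\<close>
definition nf_disc :: "complex set \<Rightarrow> complex" where
  "nf_disc K = (let d = nf_degree K; b = (SOME b. Z_basis_OK K d b) in
     (\<Sum>p | p permutes {..<d}. of_int (sign p) *
        (\<Prod>i<d. nf_trace K (b i * b (p i)))))"

text \<open>K_R = K \<otimes> R, realised (Minkowski) as the real subspace of C^Hom(K,C)
 of families z with z(conj \<circ> \<sigma>) = conj (z \<sigma>); extensional outside the embeddings.
 An element x of K corresponds to (\<sigma>(x))_\<sigma>.\<close>
type_synonym kr = "(complex \<Rightarrow> complex) \<Rightarrow> complex"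

definition KR :: "complex set \<Rightarrow> kr set" where
  "KR K = {z. (\<forall>\<sigma>\<in>embeddings K. z (cnj \<circ> \<sigma>) = cnj (z \<sigma>)) \<and>
              (\<forall>\<sigma>. \<sigma> \<notin> embeddings K \<longrightarrow> z \<sigma> = 0)}"

definition kr_mult :: "kr \<Rightarrow> kr \<Rightarrow> kr" where
  "kr_mult z w = (\<lambda>\<sigma>. z \<sigma> * w \<sigma>)"

text \<open>Complex conjugation at the complex places (identity at the real places).\<close>
definition kr_conj :: "kr \<Rightarrow> kr" where
  "kr_conj z = (\<lambda>\<sigma>. cnj (z \<sigma>))"

definition kr_trace :: "complex set \<Rightarrow> kr \<Rightarrow> complex" where
  "kr_trace K z = (\<Sum>\<sigma>\<in>embeddings K. z \<sigma>)"

definition kr_scale :: "complex \<Rightarrow> kr \<Rightarrow> kr" where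
  "kr_scale a z = (\<lambda>\<sigma>. \<sigma> a * z \<sigma>)"

definition kr_norm :: "complex set \<Rightarrow> kr \<Rightarrow> real" where
  "kr_norm K z = sqrt (cmod (nf_disc K) powr (- 2 / real (nf_degree K)) *
                        Re (kr_trace K (kr_mult z (kr_conj z))))"

type_synonym krvec = "nat \<Rightarrow> kr"

definition KRm :: "complex set \<Rightarrow> nat \<Rightarrow> krvec set" where
  "KRm K m = {x. (\<forall>l<m. x l \<in> KR K) \<and> (\<forall>l\<ge>m. x l = (\<lambda>_. 0))}"

definition krm_norm :: "complex set \<Rightarrow> nat \<Rightarrow> krvec \<Rightarrow> real" where
  "krm_norm K m x = sqrt (\<Sum>l<m. (kr_norm K (x l))\<^sup>2)"

definition krm_add :: "krvec \<Rightarrow> krvec \<Rightarrow> krvec" where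
  "krm_add x y = (\<lambda>l \<sigma>. x l \<sigma> + y l \<sigma>)"

definition krm_scale :: "complex \<Rightarrow> krvec \<Rightarrow> krvec" where
  "krm_scale a x = (\<lambda>l. kr_scale a (x l))"

definition krm_zero :: krvec where
  "krm_zero = (\<lambda>l \<sigma>. 0)"

definition krm_sum :: "('i \<Rightarrow> krvec) \<Rightarrow> 'i set \<Rightarrow> krvec" where
  "krm_sum f I = (\<lambda>l \<sigma>. \<Sum>i\<in>I. f i l \<sigma>)"

definition krm_intscale :: "int \<Rightarrow> krvec \<Rightarrow> krvec" where
  "krm_intscale n x = (\<lambda>l \<sigma>. of_int n * x l \<sigma>)"

definition OK_span :: "complex set \<Rightarrow> nat \<Rightarrow> (nat \<Rightarrow> krvec) \<Rightarrow> krvec set" where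
  "OK_span K k v = {krm_sum (\<lambda>i. krm_scale (a i) (v i)) {..<k} | a.
                      \<forall>i<k. a i \<in> ring_of_integers K}"

definition OK_free :: "complex set \<Rightarrow> nat \<Rightarrow> (nat \<Rightarrow> krvec) \<Rightarrow> bool" where
  "OK_free K k v \<longleftrightarrow> (\<forall>a. (\<forall>i<k. a i \<in> ring_of_integers K) \<longrightarrow>
      krm_sum (\<lambda>i. krm_scale (a i) (v i)) {..<k} = krm_zero \<longrightarrow> (\<forall>i<k. a i = 0))"

definition Z_basis_of :: "'i set \<Rightarrow> ('i \<Rightarrow> krvec) \<Rightarrow> krvec set \<Rightarrow> bool" where
  "Z_basis_of I w L \<longleftrightarrow> (\<forall>i\<in>I. w i \<in> L) \<and>
     (\<forall>x\<in>L. \<exists>n::'i \<Rightarrow> int. x = krm_sum (\<lambda>i. krm_intscale (n i) (w i)) I) \<and>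
     (\<forall>n::'i \<Rightarrow> int. krm_sum (\<lambda>i. krm_intscale (n i) (w i)) I = krm_zero \<longrightarrow> (\<forall>i\<in>I. n i = 0))"

end

theory Submission
  imports Defs "Jordan_Normal_Form.Char_Poly"
begin

(* Take w_ij = u_j v_i. Writing an element of O_K v_1 + ... + O_K v_k as a sum of a_i v_i and
   expanding each a_i in the basis u shows that the w_ij span the lattice; conversely an integer
   relation among the w_ij gives coefficients a_i = sum_j n_ij u_j, which are algebraic integers
   (by the determinant trick), so freeness forces a_i = 0 and then n_ij = 0.
   Multiplication by u_j scales the sigma-component of every coordinate by sigma(u_j), which is
   nonzero since embeddings are injective; hence ||w_ij|| / ||v_i|| lies between the minimum and
   the maximum of the finitely many numbers |sigma(u_j)|, independently of v, k and m. *)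

definition int_span :: "nat \<Rightarrow> (nat \<Rightarrow> 'a::comm_ring_1) \<Rightarrow> 'a set" where
  "int_span n g = range (\<lambda>c. \<Sum>j<n. of_int (c j) * g j)"

lemma int_span_memI: "x = (\<Sum>j<n. of_int (c j) * g j) \<Longrightarrow> x \<in> int_span n g"
  unfolding int_span_def by (rule range_eqI)

lemma int_span_zero: "0 \<in> int_span n g"
  by (rule int_span_memI[where c = "\<lambda>_. 0"]) simp

lemma int_span_add:
  assumes "x \<in> int_span n g" "y \<in> int_span n g"
  shows "x + y \<in> int_span n g"
proof -
  obtain c c' where "x = (\<Sum>j<n. of_int (c j) * g j)" "y = (\<Sum>j<n. of_int (c' j) * g j)"
    using assms unfolding int_span_def by (elim rangeE)
  then have "x + y = (\<Sum>j<n. of_int (c j + c' j) * g j)"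
    by (simp add: sum.distrib distrib_right)
  then show ?thesis by (rule int_span_memI)
qed

lemma int_span_of_int_mult:
  assumes "x \<in> int_span n g"
  shows "of_int t * x \<in> int_span n g"
proof -
  obtain c where "x = (\<Sum>j<n. of_int (c j) * g j)"
    using assms unfolding int_span_def by (elim rangeE)
  then have "of_int t * x = (\<Sum>j<n. of_int (t * c j) * g j)"
    by (simp add: sum_distrib_left mult.assoc)
  then show ?thesis by (rule int_span_memI)
qed

lemma int_span_sum:
  "finite F \<Longrightarrow> (\<And>t. t \<in> F \<Longrightarrow> f t \<in> int_span n g) \<Longrightarrow> sum f F \<in> int_span n g"
  by (induction F rule: finite_induct) (auto intro: int_span_zero int_span_add)

lemma int_span_generator:
  assumes "j < n"
  shows "g j \<in> int_span n g"
proof -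
  have "(\<Sum>i<n. of_int (if i = j then 1 else 0) * g i) = (\<Sum>i<n. if i = j then g i else 0)"
    by (rule sum.cong) auto
  then have "g j = (\<Sum>i<n. of_int (if i = j then 1 else 0) * g i)"
    using assms by simp
  then show ?thesis by (rule int_span_memI)
qed

lemma int_span_mult_closed:
  assumes "\<And>j. j < n \<Longrightarrow> x * g j \<in> int_span n g" and "y \<in> int_span n g"
  shows "x * y \<in> int_span n g"
proof -
  obtain c where "y = (\<Sum>j<n. of_int (c j) * g j)"
    using assms(2) unfolding int_span_def by (elim rangeE)
  then have "x * y = (\<Sum>j<n. of_int (c j) * (x * g j))"
    by (simp add: sum_distrib_left algebra_simps)
  also have "\<dots> \<in> int_span n g"
    by (intro int_span_sum int_span_of_int_mult assms(1)) auto
  finally show ?thesis .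
qed

text \<open>The determinant trick: x is an eigenvalue of the integer matrix describing
  multiplication by x on the generators, hence a root of its monic characteristic polynomial.\<close>
lemma algebraic_int_if_int_span_stable:
  fixes x :: "'a :: field_char_0"
  assumes "0 < n" "g 0 \<noteq> 0" and stable: "\<And>j. j < n \<Longrightarrow> x * g j \<in> int_span n g"
  shows "algebraic_int x"
proof -
  have "\<forall>i<n. \<exists>c. x * g i = (\<Sum>j<n. of_int (c j) * g j)"
    using stable by (simp add: int_span_def image_iff)
  then obtain A where A: "\<forall>i<n. x * g i = (\<Sum>j<n. of_int (A i j) * g j)"
    by metis
  define B where "B = (mat n n (\<lambda>(i, j). A i j) :: int mat)"
  define C where "C = (map_mat of_int B :: 'a mat)"
  define v where "v = vec n g"
  have B: "B \<in> carrier_mat n n" and C: "C \<in> carrier_mat n n"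
    unfolding C_def B_def by simp_all
  have "C *\<^sub>v v = x \<cdot>\<^sub>v v"
  proof (rule eq_vecI)
    fix i assume "i < dim_vec (x \<cdot>\<^sub>v v)"
    then have i: "i < n" unfolding v_def by simp
    have "(C *\<^sub>v v) $ i = (\<Sum>j<n. of_int (A i j) * g j)"
      using i unfolding C_def B_def v_def
      by (simp add: mult_mat_vec_def scalar_prod_def lessThan_atLeast0)
    also have "\<dots> = x * g i" using A i by simp
    finally show "(C *\<^sub>v v) $ i = (x \<cdot>\<^sub>v v) $ i" using i unfolding v_def by simp
  qed (simp add: v_def C_def B_def)
  moreover have "v \<noteq> 0\<^sub>v n"
  proof
    assume "v = 0\<^sub>v n"
    then have "v $ 0 = 0" using assms(1) by simp
    then show False using assms(1,2) unfolding v_def by simp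
  qed
  moreover have "v \<in> carrier_vec n" unfolding v_def by simp
  ultimately have "eigenvalue C x"
    unfolding eigenvalue_def eigenvector_def using C by blast
  then have "poly (char_poly C) x = 0" using eigenvalue_root_char_poly[OF C] by simp
  moreover have "char_poly C = map_poly of_int (char_poly B)"
    unfolding C_def by (rule of_int_hom.char_poly_hom[OF B])
  moreover have "lead_coeff (char_poly B) = 1" using degree_monic_char_poly[OF B] by simp
  ultimately show ?thesis unfolding algebraic_int_altdef_ipoly by auto
qed

lemma algebraic_int_power_reduction:
  fixes x :: "'a :: field_char_0"
  assumes "algebraic_int x"
  obtains a c where "0 < a" "x ^ a = (\<Sum>t<a. of_int (c t) * x ^ t)"
proof -
  obtain p where p: "poly (map_poly of_int p) x = 0" "lead_coeff p = 1"
    using assms unfolding algebraic_int_altdef_ipoly by blast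
  define a where "a = degree p"
  have "0 = (\<Sum>t\<le>a. of_int (coeff p t) * x ^ t)"
    using p(1) by (simp add: poly_altdef of_int_hom.degree_map_poly_hom a_def)
  also have "\<dots> = x ^ a + (\<Sum>t<a. of_int (coeff p t) * x ^ t)"
    using p(2) by (simp add: lessThan_Suc_atMost[symmetric] a_def)
  finally have reduction: "x ^ a = (\<Sum>t<a. of_int (- coeff p t) * x ^ t)"
    by (simp add: sum_negf eq_neg_iff_add_eq_0)
  have "0 < a"
  proof (rule ccontr)
    assume "\<not> 0 < a"
    then have "poly (map_poly (of_int :: int \<Rightarrow> 'a) p) x = 1"
      using p(2) by (simp add: poly_altdef of_int_hom.degree_map_poly_hom a_def)
    then show False using p(1) by simp
  qed
  then show ?thesis using reduction by (rule that)
qed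

text \<open>The products \<alpha>^i \<beta>^j with i, j below the degrees of monic equations for \<alpha> and \<beta>
  span a finitely generated \<int>-module stable under multiplication by \<alpha> and by \<beta>.\<close>
lemma algebraic_int_add_mult:
  fixes \<alpha> \<beta> :: "'a :: field_char_0"
  assumes "algebraic_int \<alpha>" "algebraic_int \<beta>"
  shows "algebraic_int (\<alpha> + \<beta>)" "algebraic_int (\<alpha> * \<beta>)"
proof -
  obtain a p where a: "0 < a" and p: "\<alpha> ^ a = (\<Sum>t<a. of_int (p t) * \<alpha> ^ t)"
    using algebraic_int_power_reduction[OF assms(1)] by blast
  obtain b q where b: "0 < b" and q: "\<beta> ^ b = (\<Sum>t<b. of_int (q t) * \<beta> ^ t)"
    using algebraic_int_power_reduction[OF assms(2)] by blast
  define g where "g k = \<alpha> ^ (k div b) * \<beta> ^ (k mod b)" for k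
  define S where "S = int_span (a * b) g"
  have monomial: "\<alpha> ^ e * \<beta> ^ f \<in> S" for e f
  proof (induction "e + f" arbitrary: e f rule: less_induct)
    case less
    consider "e < a" "f < b" | "a \<le> e" | "b \<le> f" by linarith
    then show ?case
    proof cases
      case 1
      then have "e * b + f < (e + 1) * b" by simp
      also have "\<dots> \<le> a * b" using 1 by (intro mult_right_mono) auto
      finally have "e * b + f < a * b" .
      moreover have "g (e * b + f) = \<alpha> ^ e * \<beta> ^ f" using 1 by (simp add: g_def)
      ultimately show ?thesis
        unfolding S_def using int_span_generator[of "e * b + f" "a * b" g] by simp
    next
      case 2
      have "\<alpha> ^ e = \<alpha> ^ a * \<alpha> ^ (e - a)"
        using 2 by (simp flip: power_add)
      then have "\<alpha> ^ e * \<beta> ^ f = \<alpha> ^ a * (\<alpha> ^ (e - a) * \<beta> ^ f)"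
        by (simp only: mult.assoc)
      also have "\<dots> = (\<Sum>t<a. of_int (p t) * (\<alpha> ^ (e - a + t) * \<beta> ^ f))"
        unfolding p sum_distrib_right by (intro sum.cong) (simp_all add: power_add ac_simps)
      also have "\<dots> \<in> S"
        unfolding S_def using 2 by (intro int_span_sum int_span_of_int_mult less[unfolded S_def]) auto
      finally show ?thesis .
    next
      case 3
      have "\<beta> ^ f = \<beta> ^ b * \<beta> ^ (f - b)"
        using 3 by (simp flip: power_add)
      then have "\<alpha> ^ e * \<beta> ^ f = \<beta> ^ b * (\<alpha> ^ e * \<beta> ^ (f - b))"
        by (simp only: ac_simps)
      also have "\<dots> = (\<Sum>t<b. of_int (q t) * (\<alpha> ^ e * \<beta> ^ (f - b + t)))"
        unfolding q sum_distrib_right by (intro sum.cong) (simp_all add: power_add ac_simps)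
      also have "\<dots> \<in> S"
        unfolding S_def using 3 by (intro int_span_sum int_span_of_int_mult less[unfolded S_def]) auto
      finally show ?thesis .
    qed
  qed
  have stable: "\<alpha> * g k \<in> S" "\<beta> * g k \<in> S" for k
    using monomial[of "Suc (k div b)" "k mod b"] monomial[of "k div b" "Suc (k mod b)"]
    by (simp_all add: g_def algebra_simps)
  have "(\<alpha> + \<beta>) * g k \<in> S" "\<alpha> * \<beta> * g k \<in> S" for k
    using int_span_add[OF stable[unfolded S_def]]
      int_span_mult_closed[OF stable(1)[unfolded S_def] stable(2)[unfolded S_def]]
    by (simp_all add: S_def distrib_right mult.assoc)
  moreover have "0 < a * b" "g 0 \<noteq> 0" using a b by (simp_all add: g_def)
  ultimately show "algebraic_int (\<alpha> + \<beta>)" "algebraic_int (\<alpha> * \<beta>)"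
    unfolding S_def by (metis algebraic_int_if_int_span_stable)+
qed

lemma algebraic_int_int_lincomb:
  "(\<And>j. j \<in> F \<Longrightarrow> algebraic_int (f j)) \<Longrightarrow> algebraic_int (\<Sum>j\<in>F. of_int (c j) * f j :: 'a :: field_char_0)"
  by (induction F rule: infinite_finite_induct) (auto intro: algebraic_int_add_mult)

lemma algebraic_integer_iff_algebraic_int: "algebraic_integer x \<longleftrightarrow> algebraic_int x"
  unfolding algebraic_integer_def algebraic_int_altdef_ipoly by blast

lemma ring_of_integers_iff: "x \<in> ring_of_integers K \<longleftrightarrow> x \<in> K \<and> algebraic_int x"
  by (simp add: ring_of_integers_def algebraic_integer_iff_algebraic_int)

lemma subfield_C_closed:
  assumes "subfield_C K"
  shows subfield_C_zero: "0 \<in> K" and subfield_C_one: "1 \<in> K"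
    and subfield_C_add: "x \<in> K \<Longrightarrow> y \<in> K \<Longrightarrow> x + y \<in> K"
    and subfield_C_mult: "x \<in> K \<Longrightarrow> y \<in> K \<Longrightarrow> x * y \<in> K"
    and subfield_C_uminus: "x \<in> K \<Longrightarrow> - x \<in> K"
    and subfield_C_inverse: "x \<in> K \<Longrightarrow> inverse x \<in> K"
  using assms unfolding subfield_C_def by auto

lemma subfield_C_of_int:
  assumes "subfield_C K"
  shows "of_int n \<in> K"
proof -
  have nat: "of_nat k \<in> K" for k
    by (induction k) (auto intro: subfield_C_closed[OF assms])
  show ?thesis
    using nat[of "nat n"] nat[of "nat (- n)"] subfield_C_uminus[OF assms, of "of_nat (nat (- n))"]
    by (cases "0 \<le> n") simp_all
qed

lemma subfield_C_int_lincomb: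
  assumes "subfield_C K" and "\<And>j. j \<in> F \<Longrightarrow> f j \<in> K"
  shows "(\<Sum>j\<in>F. of_int (c j) * f j) \<in> K"
  using assms(2)
  by (induction F rule: infinite_finite_induct)
    (auto intro: subfield_C_closed[OF assms(1)] subfield_C_of_int[OF assms(1)])

lemma ring_of_integers_int_lincomb:
  assumes "subfield_C K" and "\<And>j. j \<in> F \<Longrightarrow> f j \<in> ring_of_integers K"
  shows "(\<Sum>j\<in>F. of_int (c j) * f j) \<in> ring_of_integers K"
proof -
  have "f j \<in> K" "algebraic_int (f j)" if "j \<in> F" for j
    using assms(2)[OF that] by (simp_all add: ring_of_integers_iff)
  then show ?thesis
    by (simp add: ring_of_integers_iff subfield_C_int_lincomb[OF assms(1)] algebraic_int_int_lincomb)
qed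

lemma Z_basis_OKD:
  assumes "Z_basis_OK K d u"
  shows Z_basis_OK_mem: "j < d \<Longrightarrow> u j \<in> ring_of_integers K"
    and Z_basis_OK_spans: "x \<in> ring_of_integers K \<Longrightarrow> \<exists>c. x = (\<Sum>j<d. of_int (c j) * u j)"
    and Z_basis_OK_independent: "(\<Sum>j<d. of_int (c j) * u j) = 0 \<Longrightarrow> j < d \<Longrightarrow> c j = 0"
  using assms unfolding Z_basis_OK_def by blast+

lemma Z_basis_OK_nonzero:
  assumes "Z_basis_OK K d u" and "j < d"
  shows "u j \<noteq> 0"
proof
  assume "u j = 0"
  have "(\<Sum>i<d. of_int (if i = j then 1 else 0) * u i) = (\<Sum>i<d. if i = j then u i else 0)"
    by (rule sum.cong) auto
  also have "\<dots> = 0" using \<open>u j = 0\<close> by simp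
  finally show False
    using Z_basis_OK_independent[OF assms(1), of "\<lambda>i. if i = j then 1 else 0" j] \<open>j < d\<close> by simp
qed

lemma embedding_add: "\<sigma> \<in> embeddings K \<Longrightarrow> x \<in> K \<Longrightarrow> y \<in> K \<Longrightarrow> \<sigma> (x + y) = \<sigma> x + \<sigma> y"
  and embedding_mult: "\<sigma> \<in> embeddings K \<Longrightarrow> x \<in> K \<Longrightarrow> y \<in> K \<Longrightarrow> \<sigma> (x * y) = \<sigma> x * \<sigma> y"
  and embedding_one: "\<sigma> \<in> embeddings K \<Longrightarrow> \<sigma> 1 = 1"
  unfolding embeddings_def by auto

lemma embedding_zero:
  assumes "subfield_C K" "\<sigma> \<in> embeddings K"
  shows "\<sigma> 0 = 0"
  using embedding_add[OF assms(2) subfield_C_zero[OF assms(1)] subfield_C_zero[OF assms(1)]] by simp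

lemma embedding_uminus:
  assumes K: "subfield_C K" and \<sigma>: "\<sigma> \<in> embeddings K" and "x \<in> K"
  shows "\<sigma> (- x) = - \<sigma> x"
  using embedding_add[OF \<sigma> \<open>x \<in> K\<close> subfield_C_uminus[OF K \<open>x \<in> K\<close>]] embedding_zero[OF K \<sigma>]
  by (simp add: add_eq_0_iff)

lemma embedding_of_int:
  assumes K: "subfield_C K" and \<sigma>: "\<sigma> \<in> embeddings K"
  shows "\<sigma> (of_int n) = of_int n"
proof -
  have nat: "\<sigma> (of_nat k) = of_nat k" for k
  proof (induction k)
    case (Suc k)
    then show ?case
      using embedding_add[OF \<sigma> subfield_C_of_int[OF K, of "int k"] subfield_C_one[OF K]]
        embedding_one[OF \<sigma>] by (simp add: add.commute)
  qed (simp add: embedding_zero[OF K \<sigma>])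
  show ?thesis
    using nat[of "nat n"] nat[of "nat (- n)"]
      embedding_uminus[OF K \<sigma> subfield_C_of_int[OF K, of "int (nat (- n))"]]
    by (cases "0 \<le> n") simp_all
qed

lemma embedding_int_lincomb:
  assumes K: "subfield_C K" and \<sigma>: "\<sigma> \<in> embeddings K" and f: "\<And>j. j \<in> F \<Longrightarrow> f j \<in> K"
  shows "\<sigma> (\<Sum>j\<in>F. of_int (c j) * f j) = (\<Sum>j\<in>F. of_int (c j) * \<sigma> (f j))"
  using f
proof (induction F rule: infinite_finite_induct)
  case (insert j F)
  have "\<sigma> (of_int (c j) * f j) = of_int (c j) * \<sigma> (f j)"
    using embedding_mult[OF \<sigma> subfield_C_of_int[OF K]] embedding_of_int[OF K \<sigma>] insert.prems
    by simp
  moreover have "of_int (c j) * f j \<in> K" "(\<Sum>j\<in>F. of_int (c j) * f j) \<in> K"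
    using insert.prems
    by (auto intro: subfield_C_mult[OF K subfield_C_of_int[OF K]] subfield_C_int_lincomb[OF K])
  ultimately show ?case
    using insert embedding_add[OF \<sigma>] by simp
qed (simp_all add: embedding_zero[OF K \<sigma>])

lemma embedding_nonzero:
  assumes K: "subfield_C K" and \<sigma>: "\<sigma> \<in> embeddings K" and "x \<in> K" "x \<noteq> 0"
  shows "\<sigma> x \<noteq> 0"
  using embedding_mult[OF \<sigma> \<open>x \<in> K\<close> subfield_C_inverse[OF K \<open>x \<in> K\<close>]] embedding_one[OF \<sigma>] \<open>x \<noteq> 0\<close>
  by auto

lemma kr_trace_mult_conj:
  "Re (kr_trace K (kr_mult z (kr_conj z))) = (\<Sum>\<sigma>\<in>embeddings K. (cmod (z \<sigma>))\<^sup>2)"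
  unfolding kr_trace_def kr_mult_def kr_conj_def Re_sum
  by (rule sum.cong) (simp_all flip: complex_norm_square)

lemma krm_norm_eq:
  "krm_norm K m x = sqrt (cmod (nf_disc K) powr (- 2 / real (nf_degree K)) *
      (\<Sum>l<m. \<Sum>\<sigma>\<in>embeddings K. (cmod (x l \<sigma>))\<^sup>2))"
  unfolding krm_norm_def kr_norm_def kr_trace_mult_conj
  by (simp add: sum_nonneg sum_distrib_left)

lemma krm_norm_krm_scale_bounds:
  assumes "0 \<le> c" "0 \<le> c'"
    and bounds: "\<And>\<sigma>. \<sigma> \<in> embeddings K \<Longrightarrow> c \<le> cmod (\<sigma> a) \<and> cmod (\<sigma> a) \<le> c'"
  shows "c * krm_norm K m x \<le> krm_norm K m (krm_scale a x)"
    and "krm_norm K m (krm_scale a x) \<le> c' * krm_norm K m x"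
proof -
  define F where "F = cmod (nf_disc K) powr (- 2 / real (nf_degree K))"
  define N where "N b = (\<Sum>l<m. \<Sum>\<sigma>\<in>embeddings K. (b \<sigma> * cmod (x l \<sigma>))\<^sup>2)"
    for b :: "(complex \<Rightarrow> complex) \<Rightarrow> real"
  have F: "0 \<le> F" unfolding F_def by simp
  have norm_x: "krm_norm K m x = sqrt (F * N (\<lambda>_. 1))"
    and norm_ax: "krm_norm K m (krm_scale a x) = sqrt (F * N (\<lambda>\<sigma>. cmod (\<sigma> a)))"
    unfolding krm_norm_eq F_def N_def by (simp_all add: krm_scale_def kr_scale_def norm_mult)
  have const: "t * sqrt (F * N (\<lambda>_. 1)) = sqrt (F * N (\<lambda>_. t))" if "0 \<le> t" for t
  proof -
    have "N (\<lambda>_. t) = t\<^sup>2 * N (\<lambda>_. 1)"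
      unfolding N_def by (simp add: sum_distrib_left power_mult_distrib)
    then show ?thesis using that by (simp add: real_sqrt_mult ac_simps)
  qed
  have "N (\<lambda>_. c) \<le> N (\<lambda>\<sigma>. cmod (\<sigma> a))" "N (\<lambda>\<sigma>. cmod (\<sigma> a)) \<le> N (\<lambda>_. c')"
    unfolding N_def using bounds assms(1)
    by (auto intro!: sum_mono power_mono mult_right_mono)
  then show "c * krm_norm K m x \<le> krm_norm K m (krm_scale a x)"
    and "krm_norm K m (krm_scale a x) \<le> c' * krm_norm K m x"
    unfolding norm_x norm_ax const[OF assms(1)] const[OF assms(2)]
    using F by (auto intro: real_sqrt_le_mono mult_left_mono)
qed

lemma krm_norm_infinite_embeddings: "infinite (embeddings K) \<Longrightarrow> krm_norm K m x = 0"
  by (simp add: krm_norm_eq)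

lemma finite_positive_bounds:
  fixes S :: "real set"
  assumes "finite S" "\<And>s. s \<in> S \<Longrightarrow> 0 < s"
  obtains c c' where "0 < c" "0 < c'" "\<And>s. s \<in> S \<Longrightarrow> c \<le> s \<and> s \<le> c'"
proof (rule that)
  show "0 < Min (insert 1 S)" "0 < Max (insert 1 S)"
    using assms by (simp_all add: Min_gr_iff Max_gr_iff)
  show "Min (insert 1 S) \<le> s \<and> s \<le> Max (insert 1 S)" if "s \<in> S" for s
    using assms(1) that by simp
qed

text \<open>With infinitely many embeddings every norm is 0 (a sum over an infinite set is 0).\<close>
lemma krm_scale_Z_basis_OK_norm_bounds:
  assumes K: "subfield_C K" and u: "Z_basis_OK K d u"
  obtains c c' where "0 < c" "0 < c'"
    "\<And>m x j. j < d \<Longrightarrow> c * krm_norm K m x \<le> krm_norm K m (krm_scale (u j) x) \<and>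
        krm_norm K m (krm_scale (u j) x) \<le> c' * krm_norm K m x"
proof (cases "finite (embeddings K)")
  case True
  define S where "S = (\<lambda>(\<sigma>, j). cmod (\<sigma> (u j))) ` (embeddings K \<times> {..<d})"
  have "0 < cmod (\<sigma> (u j))" if "\<sigma> \<in> embeddings K" "j < d" for \<sigma> j
    using embedding_nonzero[OF K that(1)] Z_basis_OK_mem[OF u that(2)] Z_basis_OK_nonzero[OF u that(2)]
    by (simp add: ring_of_integers_iff)
  then have "\<And>s. s \<in> S \<Longrightarrow> 0 < s" unfolding S_def by auto
  moreover have "finite S" unfolding S_def using True by simp
  ultimately obtain c c' where "0 < c" "0 < c'" and "\<And>s. s \<in> S \<Longrightarrow> c \<le> s \<and> s \<le> c'"
    by (metis finite_positive_bounds)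
  then have "c \<le> cmod (\<sigma> (u j)) \<and> cmod (\<sigma> (u j)) \<le> c'" if "\<sigma> \<in> embeddings K" "j < d" for \<sigma> j
    using that unfolding S_def by blast
  then show ?thesis
    using that[of c c'] \<open>0 < c\<close> \<open>0 < c'\<close> krm_norm_krm_scale_bounds[of c c'] by simp
next
  case False
  then show ?thesis using that[of 1 1] by (simp add: krm_norm_infinite_embeddings)
qed

lemma KRm_vanishes_off_embeddings:
  "x \<in> KRm K m \<Longrightarrow> \<sigma> \<notin> embeddings K \<Longrightarrow> x l \<sigma> = 0"
  unfolding KRm_def KR_def by (cases "l < m") auto

definition product_basis :: "(nat \<Rightarrow> complex) \<Rightarrow> (nat \<Rightarrow> krvec) \<Rightarrow> nat \<times> nat \<Rightarrow> krvec" where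
  "product_basis u v = (\<lambda>(i, j). krm_scale (u j) (v i))"

lemma krm_sum_scale_int_lincomb:
  assumes K: "subfield_C K" and v: "\<forall>i<k. v i \<in> KRm K m" and u: "\<forall>j<d. u j \<in> K"
    and a: "\<forall>i<k. a i = (\<Sum>j<d. of_int (n (i, j)) * u j)"
  shows "krm_sum (\<lambda>i. krm_scale (a i) (v i)) {..<k} =
    krm_sum (\<lambda>p. krm_intscale (n p) (product_basis u v p)) ({..<k} \<times> {..<d})"
proof (intro ext)
  fix l \<sigma>
  have "\<sigma> (a i) * v i l \<sigma> = (\<Sum>j<d. of_int (n (i, j)) * (\<sigma> (u j) * v i l \<sigma>))" if "i < k" for i
  proof (cases "\<sigma> \<in> embeddings K")
    case True
    then show ?thesis
      using a u that embedding_int_lincomb[OF K True, of "{..<d}" u "\<lambda>j. n (i, j)"]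
      by (simp add: sum_distrib_right mult.assoc)
  next
    case False
    then show ?thesis using KRm_vanishes_off_embeddings[of "v i" K m \<sigma> l] v that by simp
  qed
  then have "(\<Sum>i<k. \<sigma> (a i) * v i l \<sigma>) =
      (\<Sum>i<k. \<Sum>j<d. of_int (n (i, j)) * (\<sigma> (u j) * v i l \<sigma>))"
    by (intro sum.cong) simp_all
  also have "\<dots> = (\<Sum>(i, j)\<in>{..<k} \<times> {..<d}. of_int (n (i, j)) * (\<sigma> (u j) * v i l \<sigma>))"
    by (rule sum.cartesian_product)
  finally show "krm_sum (\<lambda>i. krm_scale (a i) (v i)) {..<k} l \<sigma> =
      krm_sum (\<lambda>p. krm_intscale (n p) (product_basis u v p)) ({..<k} \<times> {..<d}) l \<sigma>"
    unfolding krm_sum_def krm_scale_def kr_scale_def krm_intscale_def product_basis_def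
    by (simp add: case_prod_beta)
qed

lemma krm_sum_intscale_indicator:
  assumes "finite I" "p \<in> I"
  shows "krm_sum (\<lambda>q. krm_intscale (if q = p then 1 else 0) (w q)) I = w p"
proof (intro ext)
  fix l \<sigma>
  have "(\<Sum>q\<in>I. of_int (if q = p then 1 else 0) * w q l \<sigma>) = (\<Sum>q\<in>I. if q = p then w q l \<sigma> else 0)"
    by (rule sum.cong) auto
  then show "krm_sum (\<lambda>q. krm_intscale (if q = p then 1 else 0) (w q)) I l \<sigma> = w p l \<sigma>"
    unfolding krm_sum_def krm_intscale_def using assms by simp
qed

lemma Z_basis_of_product_basis:
  assumes K: "subfield_C K" and u: "Z_basis_OK K d u"
    and v: "\<forall>i<k. v i \<in> KRm K m" and free: "OK_free K k v"
  shows "Z_basis_of ({..<k} \<times> {..<d}) (product_basis u v) (OK_span K k v)"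
proof -
  have uK: "\<forall>j<d. u j \<in> K"
    using Z_basis_OK_mem[OF u] by (simp add: ring_of_integers_iff)
  define coeff where "coeff n i = (\<Sum>j<d. of_int (n (i, j)) * u j)" for n :: "nat \<times> nat \<Rightarrow> int" and i
  have coeff_mem: "coeff n i \<in> ring_of_integers K" for n i
    unfolding coeff_def by (rule ring_of_integers_int_lincomb[OF K]) (simp add: Z_basis_OK_mem[OF u])
  have expand: "krm_sum (\<lambda>i. krm_scale (coeff n i) (v i)) {..<k} =
      krm_sum (\<lambda>p. krm_intscale (n p) (product_basis u v p)) ({..<k} \<times> {..<d})" for n
    by (rule krm_sum_scale_int_lincomb[OF K v uK]) (simp add: coeff_def)
  show ?thesis
    unfolding Z_basis_of_def
  proof (intro conjI ballI allI impI)
    fix p assume p: "p \<in> {..<k} \<times> {..<d}"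
    let ?\<delta> = "\<lambda>q. if q = p then 1 else 0 :: int"
    have "product_basis u v p = krm_sum (\<lambda>i. krm_scale (coeff ?\<delta> i) (v i)) {..<k}"
      unfolding expand using p by (simp add: krm_sum_intscale_indicator)
    then show "product_basis u v p \<in> OK_span K k v"
      unfolding OK_span_def by (intro CollectI exI[of _ "coeff ?\<delta>"] conjI) (simp_all add: coeff_mem)
  next
    fix x assume "x \<in> OK_span K k v"
    then obtain a where x: "x = krm_sum (\<lambda>i. krm_scale (a i) (v i)) {..<k}"
      and a: "\<forall>i<k. a i \<in> ring_of_integers K"
      unfolding OK_span_def by blast
    have "\<forall>i<k. \<exists>c. a i = (\<Sum>j<d. of_int (c j) * u j)"
      using a Z_basis_OK_spans[OF u] by blast
    then obtain c where c: "\<forall>i<k. a i = (\<Sum>j<d. of_int (c i j) * u j)" by metis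
    have "x = krm_sum (\<lambda>p. krm_intscale (case_prod c p) (product_basis u v p)) ({..<k} \<times> {..<d})"
      unfolding x by (rule krm_sum_scale_int_lincomb[OF K v uK]) (simp add: c)
    then show "\<exists>n. x = krm_sum (\<lambda>p. krm_intscale (n p) (product_basis u v p)) ({..<k} \<times> {..<d})"
      by blast
  next
    fix n p
    assume zero: "krm_sum (\<lambda>p. krm_intscale (n p) (product_basis u v p)) ({..<k} \<times> {..<d}) = krm_zero"
      and p: "p \<in> {..<k} \<times> {..<d}"
    have "\<forall>i<k. coeff n i = 0"
      using spec[OF free[unfolded OK_free_def], of "coeff n"] coeff_mem expand[of n] zero by simp
    then show "n p = 0"
      using p Z_basis_OK_independent[OF u, of "\<lambda>j. n (fst p, j)" "snd p"]
      by (auto simp: coeff_def)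
  qed
qed

theorem lemma2p15:
  fixes K :: "complex set" and u :: "nat \<Rightarrow> complex"
  assumes "number_field K"
    and "Z_basis_OK K (nf_degree K) u"
  shows "\<exists>c c'. c > 0 \<and> c' > 0 \<and>
    (\<forall>(m::nat) (k::nat) (v::nat \<Rightarrow> krvec).
       k \<le> m \<longrightarrow> (\<forall>i<k. v i \<in> KRm K m) \<longrightarrow> OK_free K k v \<longrightarrow>
       (\<exists>w :: nat \<times> nat \<Rightarrow> krvec.
          Z_basis_of ({..<k} \<times> {..<nf_degree K}) w (OK_span K k v) \<and>
          (\<forall>i<k. \<forall>j<nf_degree K.
             c * krm_norm K m (v i) \<le> krm_norm K m (w (i, j)) \<and>
             krm_norm K m (w (i, j)) \<le> c' * krm_norm K m (v i))))"
proof -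
  have K: "subfield_C K" using assms(1) by (simp add: number_field_def)
  obtain c c' where "0 < c" "0 < c'" and bounds: "\<And>m x j. j < nf_degree K \<Longrightarrow>
      c * krm_norm K m x \<le> krm_norm K m (krm_scale (u j) x) \<and>
      krm_norm K m (krm_scale (u j) x) \<le> c' * krm_norm K m x"
    using krm_scale_Z_basis_OK_norm_bounds[OF K assms(2)] by blast
  show ?thesis
  proof (rule exI[of _ c], rule exI[of _ c'], intro conjI allI impI \<open>0 < c\<close> \<open>0 < c'\<close>)
    fix m k v assume "k \<le> m" "\<forall>i<k. v i \<in> KRm K m" "OK_free K k v"
    then show "\<exists>w. Z_basis_of ({..<k} \<times> {..<nf_degree K}) w (OK_span K k v) \<and>
          (\<forall>i<k. \<forall>j<nf_degree K.
             c * krm_norm K m (v i) \<le> krm_norm K m (w (i, j)) \<and>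
             krm_norm K m (w (i, j)) \<le> c' * krm_norm K m (v i))"
      using Z_basis_of_product_basis[OF K assms(2), of k v m] bounds
      by (intro exI[of _ "product_basis u v"]) (simp add: product_basis_def)
  qed
qed

end
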